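(* Let $m,n\ge1$, $a\in(0,\infty)^m$, $b\in(0,\infty)^n$, and let $\Omega$ be a real $m\times n$ matrix. Let $(A,B)_0$ be a point in the interior of $\tilde{\mathcal A}$ and define $(A,B)_{k+1}=T_2(T_1((A,B)_k))$. If $(\overline A,\overline B)$ is a limit point of the sequence $((A,B)_k)_k$, then $$F(T_1(\overline A,\overline B))=F(T_2(T_1(\overline A,\overline B)))=F(\overline A,\overline B).$$
   Context: $\mathcal A$ is the set of pairs $(A,B)$ of $(m+1)\times(n+1)$ real matrices (indices $i=0,\dots,m$, $j=0,\dots,n$) with: $A_{ij},B_{ij}\ge0$; $a_i=\sum_{j=0}^nA_{ij}$ for $i=1,\dots,m$; $A_{0j}=0$ for all $j$; $b_j=\sum_{i=0}^mB_{ij}$ for $j=1,\dots,n$; $B_{i0}=0$ for all $i$. $F(A,B)=\sum_{i=1}^m\sum_{j=1}^n\sqrt{A_{ij}B_{ij}}\,\Omega_{ij}$. $\tilde{\mathcal A}\subset\mathcal A$ consists of those $(A,B)$ with: (1) $A_{ij}=B_{ij}=0$ whenever $i,j\ge1$ and $\Omega_{ij}\le0$; (2) for $j\ge1$, $B_{0j}=0$ if there is $i\ge1$ with $\Omega_{ij}>0$; (3) for $i\ge1$, $A_{i0}=0$ if there is $j\ge1$ with $\Omega_{ij}>0$. $T_1(A,B)=(E,B)$ where $E_{ij}=A_{ij}$ if $i=0$ or $j=0$, and otherwise $E_{ij}=a_iB_{ij}\Omega_{ij}^2/\sum_{k=1}^nB_{ik}\Omega_{ik}^2$ if this denominator is positive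 and $0$ otherwise. $T_2(A,B)=(A,E)$ where $E_{ij}=B_{ij}$ if $i=0$ or $j=0$, and otherwise $E_{ij}=b_jA_{ij}\Omega_{ij}^2/\sum_{k=1}^mA_{kj}\Omega_{kj}^2$ if this denominator is positive and $0$ otherwise. "Interior" refers to the interior of $\tilde{\mathcal A}$ relative to the affine space it spans. *)

theory Defs
  imports "HOL-Analysis.Analysis"
begin

text \<open>Matrices with indices 0..m, 0..n are modelled as real^('n option)^('m option):
  index None plays the role of 0, index Some i the role of i (i = 1..m, resp. 1..n).
  a :: real^'m, b :: real^'n, Omega :: real^'n^'m (indices 1..m, 1..n).\<close>

type_synonym ('m,'n) mpair = "(real^'n option^'m option) \<times> (real^'n option^'m option)"

definition Aset :: "real^'m \<Rightarrow> real^'n \<Rightarrow> ('m::finite,'n::finite) mpair set" where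
  "Aset a b = {(A,B).
     (\<forall>i j. A$i$j \<ge> 0 \<and> B$i$j \<ge> 0) \<and>
     (\<forall>i. a$i = (\<Sum>j\<in>UNIV. A$Some i$j)) \<and>
     (\<forall>j. A$None$j = 0) \<and>
     (\<forall>j. b$j = (\<Sum>i\<in>UNIV. B$i$Some j)) \<and>
     (\<forall>i. B$i$None = 0)}"

definition Atilde :: "real^'m \<Rightarrow> real^'n \<Rightarrow> real^'n^'m \<Rightarrow> ('m::finite,'n::finite) mpair set" where
  "Atilde a b \<Omega> = {(A,B) \<in> Aset a b.
     (\<forall>i j. \<Omega>$i$j \<le> 0 \<longrightarrow> A$Some i$Some j = 0 \<and> B$Some i$Some j = 0) \<and>
     (\<forall>j. (\<exists>i. \<Omega>$i$j > 0) \<longrightarrow> B$None$Some j = 0) \<and>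
     (\<forall>i. (\<exists>j. \<Omega>$i$j > 0) \<longrightarrow> A$Some i$None = 0)}"

definition Fobj :: "real^'n^'m \<Rightarrow> ('m::finite,'n::finite) mpair \<Rightarrow> real" where
  "Fobj \<Omega> P = (\<Sum>i\<in>UNIV. \<Sum>j\<in>UNIV.
      sqrt (fst P $ Some i $ Some j * snd P $ Some i $ Some j) * \<Omega>$i$j)"

definition T1 :: "real^'m \<Rightarrow> real^'n^'m \<Rightarrow> ('m::finite,'n::finite) mpair \<Rightarrow> ('m,'n) mpair" where
  "T1 a \<Omega> P = (let A = fst P; B = snd P in
     ((\<chi> i j. case (i, j) of
        (Some i', Some j') \<Rightarrow>
          (let d = (\<Sum>k\<in>UNIV. B$Some i'$Some k * (\<Omega>$i'$k)^2) in
           if d > 0 then a$i' * B$i$j * (\<Omega>$i'$j')^2 / d else 0)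
      | _ \<Rightarrow> A$i$j), B))"

definition T2 :: "real^'n \<Rightarrow> real^'n^'m \<Rightarrow> ('m::finite,'n::finite) mpair \<Rightarrow> ('m,'n) mpair" where
  "T2 b \<Omega> P = (let A = fst P; B = snd P in
     (A, (\<chi> i j. case (i, j) of
        (Some i', Some j') \<Rightarrow>
          (let d = (\<Sum>k\<in>UNIV. A$Some k$Some j' * (\<Omega>$k$j')^2) in
           if d > 0 then b$j' * A$i$j * (\<Omega>$i'$j')^2 / d else 0)
      | _ \<Rightarrow> B$i$j)))"

end

theory Submission
  imports Defs
begin

text \<open>Cauchy-Schwarz along row \<open>i\<close> gives \<open>\<Sum>\<^sub>j sqrt (A\<^sub>i\<^sub>j B\<^sub>i\<^sub>j) \<Omega>\<^sub>i\<^sub>j \<le> sqrt (a\<^sub>i \<Sum>\<^sub>j B\<^sub>i\<^sub>j \<Omega>\<^sub>i\<^sub>j\<^sup>2)\<close>,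
  with equality for the \<open>A\<close> produced by \<open>T\<^sub>1\<close>. Hence \<open>F (T\<^sub>1 P)\<close> equals the right-hand side
  summed over \<open>i\<close> and is at least \<open>F P\<close>; by transposition the same holds for \<open>T\<^sub>2\<close> and columns.
  So \<open>F\<close> increases along the iteration and stays below its value at a limit point \<open>L\<close>.
  The row bound is continuous, which yields \<open>F (T\<^sub>1 L) \<le> F L\<close>; the column bound after \<open>T\<^sub>1\<close> is
  only lower semicontinuous, which still yields \<open>F (T\<^sub>2 (T\<^sub>1 L)) \<le> F L\<close>. Monotonicity at \<open>L\<close>
  gives the reverse inequalities.\<close>

lemma sum_sqrt_mult_le:
  fixes x y w :: "'a \<Rightarrow> real"
  assumes "\<And>j. j \<in> S \<Longrightarrow> 0 \<le> x j" "\<And>j. j \<in> S \<Longrightarrow> 0 \<le> y j" "(\<Sum>j\<in>S. x j) \<le> c"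
  shows "(\<Sum>j\<in>S. sqrt (x j * y j) * w j) \<le> sqrt (c * (\<Sum>j\<in>S. y j * (w j)\<^sup>2))"
proof (rule real_le_rsqrt)
  have "(\<Sum>j\<in>S. sqrt (x j * y j) * w j)\<^sup>2 = (\<Sum>j\<in>S. sqrt (x j) * (sqrt (y j) * w j))\<^sup>2"
    by (simp add: real_sqrt_mult mult.assoc)
  also have "\<dots> \<le> (\<Sum>j\<in>S. (sqrt (x j))\<^sup>2) * (\<Sum>j\<in>S. (sqrt (y j) * w j)\<^sup>2)"
    by (rule Cauchy_Schwarz_ineq_sum)
  also have "\<dots> = (\<Sum>j\<in>S. x j) * (\<Sum>j\<in>S. y j * (w j)\<^sup>2)"
    using assms by (simp add: power_mult_distrib)
  also have "\<dots> \<le> c * (\<Sum>j\<in>S. y j * (w j)\<^sup>2)"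
    using assms by (intro mult_right_mono sum_nonneg) auto
  finally show "(\<Sum>j\<in>S. sqrt (x j * y j) * w j)\<^sup>2 \<le> c * (\<Sum>j\<in>S. y j * (w j)\<^sup>2)" .
qed

lemma sum_sqrt_mult_eq:
  fixes y w :: "'a \<Rightarrow> real" and S :: "'a set"
  defines "d \<equiv> \<Sum>j\<in>S. y j * (w j)\<^sup>2"
  assumes "\<And>j. j \<in> S \<Longrightarrow> 0 \<le> y j" "\<And>j. j \<in> S \<Longrightarrow> w j < 0 \<Longrightarrow> y j = 0" "0 \<le> c"
  shows "(\<Sum>j\<in>S. sqrt (c * y j * (w j)\<^sup>2 / d * y j) * w j) = sqrt (c * d)"
proof -
  have "sqrt (c * y j * (w j)\<^sup>2 / d * y j) * w j = sqrt (c / d) * (y j * (w j)\<^sup>2)" if "j \<in> S" for j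
  proof -
    have "c * y j * (w j)\<^sup>2 / d * y j = c / d * (y j * w j)\<^sup>2"
      by (simp add: power2_eq_square)
    then have "sqrt (c * y j * (w j)\<^sup>2 / d * y j) = sqrt (c / d) * \<bar>y j * w j\<bar>"
      by (simp only: real_sqrt_mult real_sqrt_abs)
    then have "sqrt (c * y j * (w j)\<^sup>2 / d * y j) = sqrt (c / d) * (y j * \<bar>w j\<bar>)"
      using assms(2)[OF that] by (simp add: abs_mult)
    moreover have "y j * \<bar>w j\<bar> * w j = y j * (w j)\<^sup>2"
      using assms(3)[OF that] by (cases "w j < 0") (auto simp: power2_eq_square)
    ultimately show ?thesis by (simp add: mult.assoc)
  qed
  then have "(\<Sum>j\<in>S. sqrt (c * y j * (w j)\<^sup>2 / d * y j) * w j) = sqrt (c / d) * d"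
    by (simp add: sum_distrib_left d_def)
  also have "\<dots> = sqrt (c * d)"
  proof -
    have "0 \<le> d" unfolding d_def using assms(2) by (auto intro: sum_nonneg)
    then show ?thesis
      by (cases "d = 0") (simp_all add: real_sqrt_divide real_sqrt_mult, metis real_div_sqrt times_divide_eq_right)
  qed
  finally show ?thesis .
qed

lemma incseq_le_subseq_limit:
  fixes f :: "nat \<Rightarrow> 'a::linorder_topology"
  assumes "incseq f" "strict_mono r" "(f \<circ> r) \<longlonglongrightarrow> l"
  shows "f k \<le> l"
proof (rule tendsto_lowerbound[OF assms(3)])
  have "f k \<le> f (r n)" if "k \<le> n" for n
    using assms(1,2) that seq_suble[of r n] by (simp add: incseq_def)
  then show "\<forall>\<^sub>F n in sequentially. f k \<le> (f \<circ> r) n"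
    by (auto simp: eventually_sequentially)
qed simp

text \<open>For real sequences this says \<open>l \<le> liminf s\<close>; phrasing it with a convergent minorant lets it
  compose with the \<open>tendsto\<close> rules.\<close>
definition below_liminf :: "real \<Rightarrow> (nat \<Rightarrow> real) \<Rightarrow> bool" where
  "below_liminf l s \<longleftrightarrow> (\<exists>u. u \<longlonglongrightarrow> l \<and> (\<forall>\<^sub>F k in sequentially. u k \<le> s k))"

lemma below_liminf_tendsto: "s \<longlonglongrightarrow> l \<Longrightarrow> below_liminf l s"
  unfolding below_liminf_def by auto

lemma below_liminf_le:
  assumes "below_liminf l s" "\<forall>\<^sub>F k in sequentially. s k \<le> c"
  shows "l \<le> c"
proof -
  obtain u where "u \<longlonglongrightarrow> l" "\<forall>\<^sub>F k in sequentially. u k \<le> s k"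
    using assms(1) unfolding below_liminf_def by blast
  moreover from this(2) assms(2) have "\<forall>\<^sub>F k in sequentially. u k \<le> c"
    by eventually_elim simp
  ultimately show ?thesis by (simp add: tendsto_upperbound)
qed

lemma below_liminf_add:
  assumes "below_liminf l s" "below_liminf l' s'"
  shows "below_liminf (l + l') (\<lambda>k. s k + s' k)"
proof -
  obtain u u' where "u \<longlonglongrightarrow> l" "\<forall>\<^sub>F k in sequentially. u k \<le> s k"
    and "u' \<longlonglongrightarrow> l'" "\<forall>\<^sub>F k in sequentially. u' k \<le> s' k"
    using assms unfolding below_liminf_def by blast
  moreover from this(2,4) have "\<forall>\<^sub>F k in sequentially. u k + u' k \<le> s k + s' k"
    by eventually_elim (rule add_mono)
  ultimately show ?thesis
    unfolding below_liminf_def by (blast intro: tendsto_add)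
qed

lemma below_liminf_sum:
  assumes "finite I" "\<And>i. i \<in> I \<Longrightarrow> below_liminf (l i) (s i)"
  shows "below_liminf (\<Sum>i\<in>I. l i) (\<lambda>k. \<Sum>i\<in>I. s i k)"
  using assms
proof (induction I rule: finite_induct)
  case empty
  then show ?case by (simp add: below_liminf_tendsto)
next
  case (insert i I)
  then have "below_liminf (l i + (\<Sum>i\<in>I. l i)) (\<lambda>k. s i k + (\<Sum>i\<in>I. s i k))"
    by (intro below_liminf_add) auto
  with insert.hyps show ?case by simp
qed

lemma below_liminf_compose:
  assumes "mono f" "isCont f l" "below_liminf l s"
  shows "below_liminf (f l) (\<lambda>k. f (s k))"
proof -
  obtain u where "u \<longlonglongrightarrow> l" "\<forall>\<^sub>F k in sequentially. u k \<le> s k"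
    using assms(3) unfolding below_liminf_def by blast
  moreover from this(2) have "\<forall>\<^sub>F k in sequentially. f (u k) \<le> f (s k)"
    by eventually_elim (use assms(1) in \<open>rule monoD\<close>)
  ultimately show ?thesis
    unfolding below_liminf_def by (blast intro: isCont_tendsto_compose assms(2))
qed

text \<open>At \<open>q = 0\<close> the limit quotient is the junk value \<open>p / 0 = 0\<close>, which lies below all the
  nonnegative quotients.\<close>
lemma below_liminf_divide:
  fixes g d :: "nat \<Rightarrow> real"
  assumes "g \<longlonglongrightarrow> p" "d \<longlonglongrightarrow> q" "\<And>k. 0 \<le> g k" "\<And>k. 0 \<le> d k"
  shows "below_liminf (p / q) (\<lambda>k. g k / d k)"
proof (cases "q = 0")
  case True
  then show ?thesis
    unfolding below_liminf_def using assms(3,4)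
    by (intro exI[of _ "\<lambda>k. 0"] conjI always_eventually allI) simp_all
next
  case False
  then show ?thesis using assms(1,2) by (intro below_liminf_tendsto tendsto_divide)
qed

definition A_entry :: "('m::finite, 'n::finite) mpair \<Rightarrow> 'm \<Rightarrow> 'n \<Rightarrow> real" where
  "A_entry P i j = fst P $ Some i $ Some j"

definition B_entry :: "('m::finite, 'n::finite) mpair \<Rightarrow> 'm \<Rightarrow> 'n \<Rightarrow> real" where
  "B_entry P i j = snd P $ Some i $ Some j"

definition row_weight :: "real^'n^'m \<Rightarrow> ('m::finite, 'n::finite) mpair \<Rightarrow> 'm \<Rightarrow> real" where
  "row_weight \<Omega> P i = (\<Sum>j\<in>UNIV. B_entry P i j * (\<Omega>$i$j)\<^sup>2)"

definition row_bound :: "real^'m \<Rightarrow> real^'n^'m \<Rightarrow> ('m::finite, 'n::finite) mpair \<Rightarrow> real" where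
  "row_bound a \<Omega> P = (\<Sum>i\<in>UNIV. sqrt (a$i * row_weight \<Omega> P i))"

text \<open>Only the block \<open>i, j \<ge> 1\<close> matters for \<open>F\<close>, \<open>T\<^sub>1\<close> and \<open>T\<^sub>2\<close>. On it, the marginal
  equalities of \<open>\<A>\<close> are weakened to inequalities, because \<open>T\<^sub>1\<close> (resp. \<open>T\<^sub>2\<close>) empties a whole
  row (resp. column) whose weight vanishes.\<close>
definition feasible :: "real^'m \<Rightarrow> real^'n \<Rightarrow> real^'n^'m \<Rightarrow> ('m::finite, 'n::finite) mpair \<Rightarrow> bool" where
  "feasible a b \<Omega> P \<longleftrightarrow>
     (\<forall>i j. 0 \<le> A_entry P i j \<and> 0 \<le> B_entry P i j) \<and>
     (\<forall>i j. \<Omega>$i$j < 0 \<longrightarrow> A_entry P i j = 0 \<and> B_entry P i j = 0) \<and>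
     (\<forall>i. (\<Sum>j\<in>UNIV. A_entry P i j) \<le> a$i) \<and>
     (\<forall>j. (\<Sum>i\<in>UNIV. B_entry P i j) \<le> b$j)"

lemma Fobj_eq_entries:
  "Fobj \<Omega> P = (\<Sum>i\<in>UNIV. \<Sum>j\<in>UNIV. sqrt (A_entry P i j * B_entry P i j) * \<Omega>$i$j)"
  by (simp add: Fobj_def A_entry_def B_entry_def)

lemma Atilde_feasible:
  assumes "P \<in> Atilde a b \<Omega>"
  shows "feasible a b \<Omega> P"
proof -
  obtain A B where P: "P = (A, B)" by fastforce
  have nonneg: "\<forall>i j. 0 \<le> A$i$j \<and> 0 \<le> B$i$j"
    and rows: "\<forall>i. a$i = (\<Sum>j\<in>UNIV. A$Some i$j)" and cols: "\<forall>j. b$j = (\<Sum>i\<in>UNIV. B$i$Some j)"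
    and sign: "\<forall>i j. \<Omega>$i$j \<le> 0 \<longrightarrow> A$Some i$Some j = 0 \<and> B$Some i$Some j = 0"
    using assms unfolding P Atilde_def Aset_def by auto
  have "(\<Sum>j\<in>UNIV. A$Some i$Some j) \<le> a$i" for i
  proof -
    have "(\<Sum>j\<in>UNIV. A$Some i$Some j) = (\<Sum>j\<in>range Some. A$Some i$j)"
      by (simp add: sum.reindex)
    also have "\<dots> \<le> (\<Sum>j\<in>UNIV. A$Some i$j)"
      using nonneg by (intro sum_mono2) auto
    finally show ?thesis using rows by simp
  qed
  moreover have "(\<Sum>i\<in>UNIV. B$Some i$Some j) \<le> b$j" for j
  proof -
    have "(\<Sum>i\<in>UNIV. B$Some i$Some j) = (\<Sum>i\<in>range Some. B$i$Some j)"
      by (simp add: sum.reindex)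
    also have "\<dots> \<le> (\<Sum>i\<in>UNIV. B$i$Some j)"
      using nonneg by (intro sum_mono2) auto
    finally show ?thesis using cols by simp
  qed
  ultimately show ?thesis
    using nonneg sign unfolding feasible_def A_entry_def B_entry_def P by auto
qed

lemma row_weight_nonneg: "feasible a b \<Omega> P \<Longrightarrow> 0 \<le> row_weight \<Omega> P i"
  unfolding row_weight_def feasible_def by (auto intro!: sum_nonneg)

lemma T1_B_entry [simp]: "B_entry (T1 a \<Omega> P) = B_entry P"
  by (simp add: fun_eq_iff T1_def Let_def B_entry_def)

lemma T1_A_entry:
  assumes "feasible a b \<Omega> P"
  shows "A_entry (T1 a \<Omega> P) i j = a$i * B_entry P i j * (\<Omega>$i$j)\<^sup>2 / row_weight \<Omega> P i"
  using row_weight_nonneg[OF assms, of i]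
  by (auto simp: T1_def Let_def A_entry_def B_entry_def row_weight_def)

lemma feasible_T1:
  assumes "feasible a b \<Omega> P" "\<forall>i. 0 \<le> a$i"
  shows "feasible a b \<Omega> (T1 a \<Omega> P)"
proof -
  have "(\<Sum>j\<in>UNIV. A_entry (T1 a \<Omega> P) i j) \<le> a$i" for i
  proof -
    have "(\<Sum>j\<in>UNIV. A_entry (T1 a \<Omega> P) i j) = a$i / row_weight \<Omega> P i * row_weight \<Omega> P i"
      by (simp add: T1_A_entry[OF assms(1)] row_weight_def sum_distrib_left sum_divide_distrib mult.assoc)
    also have "\<dots> \<le> a$i"
      using assms(2) by (cases "row_weight \<Omega> P i = 0") auto
    finally show ?thesis .
  qed
  then show ?thesis
    using assms row_weight_nonneg[OF assms(1)]
    unfolding feasible_def T1_A_entry[OF assms(1)] T1_B_entry by auto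
qed

lemma Fobj_le_row_bound:
  assumes "feasible a b \<Omega> P"
  shows "Fobj \<Omega> P \<le> row_bound a \<Omega> P"
  unfolding Fobj_eq_entries row_bound_def row_weight_def
  using assms unfolding feasible_def by (intro sum_mono sum_sqrt_mult_le) auto

text \<open>\<open>T\<^sub>1\<close> picks \<open>A\<close> making the Cauchy-Schwarz inequality behind \<open>Fobj_le_row_bound\<close> an equality.\<close>
lemma Fobj_T1:
  assumes "feasible a b \<Omega> P" "\<forall>i. 0 \<le> a$i"
  shows "Fobj \<Omega> (T1 a \<Omega> P) = row_bound a \<Omega> P"
  unfolding Fobj_eq_entries row_bound_def T1_A_entry[OF assms(1)] T1_B_entry row_weight_def
  using assms unfolding feasible_def by (intro sum.cong refl sum_sqrt_mult_eq) auto

definition mpair_transpose :: "('m::finite, 'n::finite) mpair \<Rightarrow> ('n, 'm) mpair" where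
  "mpair_transpose P = (transpose (snd P), transpose (fst P))"

lemma A_entry_mpair_transpose [simp]: "A_entry (mpair_transpose P) j i = B_entry P i j"
  by (simp add: A_entry_def B_entry_def mpair_transpose_def transpose_def)

lemma B_entry_mpair_transpose [simp]: "B_entry (mpair_transpose P) j i = A_entry P i j"
  by (simp add: A_entry_def B_entry_def mpair_transpose_def transpose_def)

lemma transpose_nth_nth [simp]: "transpose M $ j $ i = M $ i $ j"
  by (simp add: transpose_def)

lemma Fobj_mpair_transpose: "Fobj (transpose \<Omega>) (mpair_transpose P) = Fobj \<Omega> P"
  unfolding Fobj_eq_entries by (subst sum.swap) (simp add: mult.commute)

lemma feasible_mpair_transpose:
  "feasible b a (transpose \<Omega>) (mpair_transpose P) \<longleftrightarrow> feasible a b \<Omega> P"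
  unfolding feasible_def by auto

lemma T2_eq_T1_mpair_transpose:
  "T2 b \<Omega> P = mpair_transpose (T1 b (transpose \<Omega>) (mpair_transpose P))"
  by (auto simp: T1_def T2_def mpair_transpose_def Let_def vec_eq_iff split: option.split)

lemma feasible_T2:
  assumes "feasible a b \<Omega> P" "\<forall>j. 0 \<le> b$j"
  shows "feasible a b \<Omega> (T2 b \<Omega> P)"
proof -
  have "feasible b a (transpose \<Omega>) (T1 b (transpose \<Omega>) (mpair_transpose P))"
    using assms by (simp add: feasible_T1 feasible_mpair_transpose)
  then show ?thesis
    using feasible_mpair_transpose[of a b "transpose \<Omega>"] by (simp add: T2_eq_T1_mpair_transpose)
qed

lemma Fobj_T2:
  assumes "feasible a b \<Omega> P" "\<forall>j. 0 \<le> b$j"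
  shows "Fobj \<Omega> (T2 b \<Omega> P) = row_bound b (transpose \<Omega>) (mpair_transpose P)"
  using Fobj_mpair_transpose[of "transpose \<Omega>"] assms
  by (simp add: T2_eq_T1_mpair_transpose Fobj_T1 feasible_mpair_transpose)

lemma Fobj_le_Fobj_T1:
  assumes "feasible a b \<Omega> P" "\<forall>i. 0 \<le> a$i"
  shows "Fobj \<Omega> P \<le> Fobj \<Omega> (T1 a \<Omega> P)"
  using Fobj_le_row_bound[OF assms(1)] Fobj_T1[OF assms] by simp

lemma Fobj_le_Fobj_T2:
  assumes "feasible a b \<Omega> P" "\<forall>j. 0 \<le> b$j"
  shows "Fobj \<Omega> P \<le> Fobj \<Omega> (T2 b \<Omega> P)"
  using Fobj_le_row_bound[of b a "transpose \<Omega>" "mpair_transpose P"] assms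
  by (simp add: Fobj_T2 Fobj_mpair_transpose feasible_mpair_transpose)

lemma row_weight_mpair_transpose:
  "row_weight (transpose \<Omega>) (mpair_transpose P) j = (\<Sum>i\<in>UNIV. A_entry P i j * (\<Omega>$i$j)\<^sup>2)"
  by (simp add: row_weight_def)

lemma tendsto_A_entry: "(Y \<longlongrightarrow> L) F \<Longrightarrow> ((\<lambda>k. A_entry (Y k) i j) \<longlongrightarrow> A_entry L i j) F"
  unfolding A_entry_def by (intro tendsto_vec_nth tendsto_fst)

lemma tendsto_B_entry: "(Y \<longlongrightarrow> L) F \<Longrightarrow> ((\<lambda>k. B_entry (Y k) i j) \<longlongrightarrow> B_entry L i j) F"
  unfolding B_entry_def by (intro tendsto_vec_nth tendsto_snd)

lemma tendsto_row_weight: "(Y \<longlongrightarrow> L) F \<Longrightarrow> ((\<lambda>k. row_weight \<Omega> (Y k) i) \<longlongrightarrow> row_weight \<Omega> L i) F"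
  unfolding row_weight_def by (intro tendsto_intros tendsto_B_entry)

lemma tendsto_row_bound: "(Y \<longlongrightarrow> L) F \<Longrightarrow> ((\<lambda>k. row_bound a \<Omega> (Y k)) \<longlongrightarrow> row_bound a \<Omega> L) F"
  unfolding row_bound_def by (intro tendsto_intros tendsto_row_weight)

lemma tendsto_Fobj: "(Y \<longlongrightarrow> L) F \<Longrightarrow> ((\<lambda>k. Fobj \<Omega> (Y k)) \<longlongrightarrow> Fobj \<Omega> L) F"
  unfolding Fobj_eq_entries by (intro tendsto_intros tendsto_A_entry tendsto_B_entry)

lemma feasible_limit:
  assumes "\<And>k. feasible a b \<Omega> (Y k)" "Y \<longlonglongrightarrow> L"
  shows "feasible a b \<Omega> L"
proof -
  have "0 \<le> A_entry L i j" "0 \<le> B_entry L i j" for i j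
    using assms by (auto intro!: LIMSEQ_le_const tendsto_A_entry tendsto_B_entry simp: feasible_def)
  moreover have "A_entry L i j = 0 \<and> B_entry L i j = 0" if "\<Omega>$i$j < 0" for i j
    using assms that LIMSEQ_unique[OF tendsto_A_entry[OF assms(2)]] LIMSEQ_unique[OF tendsto_B_entry[OF assms(2)]]
    by (simp add: feasible_def)
  moreover have "(\<Sum>j\<in>UNIV. A_entry L i j) \<le> a$i" for i
    by (rule LIMSEQ_le_const2[OF tendsto_sum[OF tendsto_A_entry[OF assms(2)]]])
      (use assms(1) in \<open>auto simp: feasible_def\<close>)
  moreover have "(\<Sum>i\<in>UNIV. B_entry L i j) \<le> b$j" for j
    by (rule LIMSEQ_le_const2[OF tendsto_sum[OF tendsto_B_entry[OF assms(2)]]])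
      (use assms(1) in \<open>auto simp: feasible_def\<close>)
  ultimately show ?thesis unfolding feasible_def by blast
qed

lemma tendsto_Fobj_T1:
  assumes "\<And>k. feasible a b \<Omega> (Y k)" "Y \<longlonglongrightarrow> L" "\<forall>i. 0 \<le> a$i"
  shows "(\<lambda>k. Fobj \<Omega> (T1 a \<Omega> (Y k))) \<longlonglongrightarrow> Fobj \<Omega> (T1 a \<Omega> L)"
proof -
  have "Fobj \<Omega> (T1 a \<Omega> (Y k)) = row_bound a \<Omega> (Y k)" for k
    using Fobj_T1[OF assms(1,3)] .
  then show ?thesis
    using tendsto_row_bound[OF assms(2)] Fobj_T1[OF feasible_limit[OF assms(1,2)] assms(3)] by simp
qed

text \<open>\<open>T\<^sub>1\<close> jumps where a row weight vanishes, so \<open>F \<circ> T\<^sub>2 \<circ> T\<^sub>1\<close> is not continuous. It is lower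
  semicontinuous: a row with vanishing weight in the limit contributes the junk value \<open>0\<close> there.\<close>
lemma below_liminf_Fobj_T2_T1:
  assumes Y: "\<And>k. feasible a b \<Omega> (Y k)" and lim: "Y \<longlonglongrightarrow> L"
    and a: "\<forall>i. 0 \<le> a$i" and b: "\<forall>j. 0 \<le> b$j"
  shows "below_liminf (Fobj \<Omega> (T2 b \<Omega> (T1 a \<Omega> L))) (\<lambda>k. Fobj \<Omega> (T2 b \<Omega> (T1 a \<Omega> (Y k))))"
proof -
  define col_weight where "col_weight P j = (\<Sum>i\<in>UNIV. a$i * B_entry P i j * (\<Omega>$i$j)^4 / row_weight \<Omega> P i)" for P j
  have Fobj_eq: "Fobj \<Omega> (T2 b \<Omega> (T1 a \<Omega> P)) = (\<Sum>j\<in>UNIV. sqrt (b$j * col_weight P j))"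
    if "feasible a b \<Omega> P" for P
  proof -
    have entry: "A_entry (T1 a \<Omega> P) i j * (\<Omega>$i$j)\<^sup>2 = a$i * B_entry P i j * (\<Omega>$i$j)^4 / row_weight \<Omega> P i"
      for i j
      by (simp add: T1_A_entry[OF that] power2_eq_square power4_eq_xxxx)
    have "Fobj \<Omega> (T2 b \<Omega> (T1 a \<Omega> P)) = row_bound b (transpose \<Omega>) (mpair_transpose (T1 a \<Omega> P))"
      by (rule Fobj_T2[OF feasible_T1[OF that a] b])
    then show ?thesis
      by (simp only: row_bound_def row_weight_mpair_transpose entry col_weight_def)
  qed
  have "below_liminf (col_weight L j) (\<lambda>k. col_weight (Y k) j)" for j
    unfolding col_weight_def using Y a
    by (intro below_liminf_sum below_liminf_divide tendsto_intros tendsto_B_entry tendsto_row_weight lim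
        row_weight_nonneg) (auto simp: feasible_def)
  then have "below_liminf (sqrt (b$j * col_weight L j)) (\<lambda>k. sqrt (b$j * col_weight (Y k) j))" for j
    using b by (intro below_liminf_compose[where f = "\<lambda>x. sqrt (b$j * x)"])
      (auto intro!: monoI real_sqrt_le_mono mult_left_mono continuous_intros)
  then show ?thesis
    unfolding Fobj_eq[OF feasible_limit[OF Y lim]] Fobj_eq[OF Y] by (intro below_liminf_sum) auto
qed

theorem lemma2p17:
  fixes a :: "real^'m::finite" and b :: "real^'n::finite" and \<Omega> :: "real^'n^'m"
    and X :: "nat \<Rightarrow> ('m,'n) mpair" and L :: "('m,'n) mpair" and r :: "nat \<Rightarrow> nat"
  assumes apos: "\<forall>i. a$i > 0" and bpos: "\<forall>j. b$j > 0"
    and X0: "X 0 \<in> rel_interior (Atilde a b \<Omega>)"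
    and Xsuc: "\<forall>k. X (Suc k) = T2 b \<Omega> (T1 a \<Omega> (X k))"
    and r: "strict_mono r" and lim: "(X \<circ> r) \<longlonglongrightarrow> L"
  shows "Fobj \<Omega> (T1 a \<Omega> L) = Fobj \<Omega> (T2 b \<Omega> (T1 a \<Omega> L)) \<and>
         Fobj \<Omega> (T2 b \<Omega> (T1 a \<Omega> L)) = Fobj \<Omega> L"
proof -
  have a: "\<forall>i. 0 \<le> a$i" and b: "\<forall>j. 0 \<le> b$j"
    using apos bpos by (simp_all add: less_imp_le)
  have X: "feasible a b \<Omega> (X k)" for k
  proof (induction k)
    case 0
    show ?case using X0 rel_interior_subset Atilde_feasible by blast
  qed (simp add: Xsuc feasible_T1 feasible_T2 a b)
  have T1_le_Suc: "Fobj \<Omega> (T1 a \<Omega> (X k)) \<le> Fobj \<Omega> (X (Suc k))" for k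
    using Fobj_le_Fobj_T2[OF feasible_T1[OF X a] b] Xsuc by simp
  have Xr: "(\<lambda>k. X (r k)) \<longlonglongrightarrow> L"
    using lim by (simp add: comp_def)
  have "incseq (\<lambda>k. Fobj \<Omega> (X k))"
    using Fobj_le_Fobj_T1[OF X a] T1_le_Suc by (intro incseq_SucI) (blast intro: order_trans)
  moreover have "((\<lambda>k. Fobj \<Omega> (X k)) \<circ> r) \<longlonglongrightarrow> Fobj \<Omega> L"
    using tendsto_Fobj[OF Xr] by (simp add: comp_def)
  ultimately have le_L: "Fobj \<Omega> (X k) \<le> Fobj \<Omega> L" for k
    using incseq_le_subseq_limit[OF _ r] by blast
  have L: "feasible a b \<Omega> L"
    using feasible_limit[OF X Xr] .
  have "Fobj \<Omega> (T1 a \<Omega> L) \<le> Fobj \<Omega> L"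
    by (rule LIMSEQ_le_const2[OF tendsto_Fobj_T1[OF X Xr a]]) (use T1_le_Suc le_L order_trans in blast)
  moreover have "Fobj \<Omega> (T2 b \<Omega> (T1 a \<Omega> L)) \<le> Fobj \<Omega> L"
    by (rule below_liminf_le[OF below_liminf_Fobj_T2_T1[OF X Xr a b]]) (simp add: le_L flip: Xsuc[rule_format])
  moreover have "Fobj \<Omega> L \<le> Fobj \<Omega> (T1 a \<Omega> L)"
    using Fobj_le_Fobj_T1[OF L a] .
  moreover have "Fobj \<Omega> (T1 a \<Omega> L) \<le> Fobj \<Omega> (T2 b \<Omega> (T1 a \<Omega> L))"
    using Fobj_le_Fobj_T2[OF feasible_T1[OF L a] b] .
  ultimately show ?thesis by linarith
qed

end
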